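(* There exists $\alpha\in\mu_{p-1}\subset\mathbb Z_p$ such that for every prime number $\ell$ with $\ell\ge p^2$ and $\ell\equiv\alpha\pmod p$, and $\zeta_\ell$ a primitive $\ell$-th root of unity, $$\mathrm{Tr}_{\mathbb Q(\zeta_\ell)/\mathbb Q}\left(\frac{\zeta_\ell^{p+1}+\zeta_\ell^{p-1}}{(\zeta_\ell^p-1)^2}\right)\not\equiv 0\pmod p,$$ i.e. this rational number (which is $p$-integral) has $p$-adic valuation $0$.
   Context: $p\ge5$ is a prime; $\mu_{p-1}\subset\mathbb Z_p$ denotes the $(p-1)$-th roots of unity in $\mathbb Z_p$. *)

theory Defs
  imports Complex_Main "HOL-Computational_Algebra.Primes"
begin

definition prim_root_unity :: "nat \<Rightarrow> complex \<Rightarrow> bool" where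
  "prim_root_unity n z \<longleftrightarrow> 0 < n \<and> z ^ n = 1 \<and> (\<forall>k. 0 < k \<and> k < n \<longrightarrow> z ^ k \<noteq> 1)"

text \<open>Trace from Q(zeta_n) to Q of the element f(zeta_n), where zeta_n is a primitive
  n-th root of unity and f is a rational function with rational coefficients:
  the sum of the Galois conjugates f(zeta_n^k), k ranging over (Z/nZ)^*.\<close>
definition cyclo_trace :: "nat \<Rightarrow> complex \<Rightarrow> (complex \<Rightarrow> complex) \<Rightarrow> complex" where
  "cyclo_trace n \<zeta> f = (\<Sum>k | k < n \<and> coprime k n. f (\<zeta> ^ k))"

definition padic_unit :: "nat \<Rightarrow> rat \<Rightarrow> bool" where
  "padic_unit p q \<longleftrightarrow> \<not> int p dvd fst (quotient_of q) \<and> \<not> int p dvd snd (quotient_of q)"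

end

theory Submission
  imports Defs "HOL-Number_Theory.Residues"
begin

(* For a nontrivial l-th root of unity v,
     1 / (v - 1)^2 = - (1 / 2l) * sum_{j<l} j (j + 2 - l) v^j.
   Expanding each conjugate (w^(p+1) + w^(p-1)) / (w^p - 1)^2, w = zeta^k, in v = w^p and
   summing over k gives Ramanujan sums, which retain only the two indices j with
   l | p j + p + 1 and l | p j + p - 1. These are exchanged by j |-> l - 2 - j, which fixes
   j (j + 2 - l), so 6 Tr = - 6 j (j + 2 - l) - (l - 1)(l - 5) where p (j + 1) = 1 (mod l).
   Since -36 Tr = (6 j + 6 - 3 l)^2 - 3 (l^2 + 2), p divides the trace only if
   3 (l^2 + 2) = 3 (a^2 + 2) is a square mod p.
   So a must make 3 (a^2 + 2) a non-residue. If 3 is a non-residue, a = 2 or a = sqrt 2 does.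
   If 3 is a residue, some a^2 + 2 with a /= 0 is a non-residue: otherwise induction along
   m |-> m + 2 makes every odd m < p a square, and with 0 and 4 these are more than the
   (p + 1) / 2 squares mod p. *)

section \<open>Quadratic residues\<close>

lemma exists_nat_residue:
  assumes "0 < p"
  obtains x where "x < p" "[int x = y] (mod int p)" "x = 0 \<longleftrightarrow> int p dvd y"
proof
  show "nat (y mod int p) < p" "[int (nat (y mod int p)) = y] (mod int p)"
    using assms by (simp_all add: nat_less_iff)
  have "0 \<le> y mod int p"
    using assms by simp
  then show "nat (y mod int p) = 0 \<longleftrightarrow> int p dvd y"
    by (simp add: dvd_eq_mod_eq_0)
qed

lemma cong_square_imp_not_dvd:
  fixes y c m :: int
  assumes "[y^2 = c] (mod m)" "\<not> m dvd c"
  shows "\<not> m dvd y"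
proof
  assume "m dvd y"
  then have "m dvd y^2"
    by (simp add: power2_eq_square)
  then show False
    using cong_dvd_iff[OF assms(1)] assms(2) by simp
qed

lemma QuadRes_cong:
  assumes "QuadRes m a" "[a = b] (mod m)"
  shows "QuadRes m b"
  using assms unfolding QuadRes_def by (blast intro: cong_trans)

lemma QuadRes_cancel_square:
  fixes p :: int
  assumes "prime p" "\<not> p dvd c" "QuadRes p x" "[x = c^2 * z] (mod p)"
  shows "QuadRes p z"
proof -
  have "coprime c p"
    using prime_imp_coprime[OF assms(1,2)] by (simp add: coprime_commute)
  then obtain c' where c': "[c * c' = 1] (mod p)"
    using cong_solve_coprime_int by blast
  obtain y where "[y^2 = x] (mod p)"
    using assms(3) unfolding QuadRes_def by blast
  then have "[y^2 * c'^2 = c^2 * z * c'^2] (mod p)"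
    using assms(4) by (intro cong_mult cong_refl) (rule cong_trans)
  then have "[(y * c')^2 = (c * c')^2 * z] (mod p)"
    by (simp add: power_mult_distrib ac_simps)
  also have "[(c * c')^2 * z = 1^2 * z] (mod p)"
    by (intro cong_mult cong_pow cong_refl c')
  finally show ?thesis
    unfolding QuadRes_def by auto
qed

lemma QuadRes_nonzero_square_plus_two:
  assumes "prime p"
    and squares: "\<And>a::nat. 0 < a \<Longrightarrow> a < p \<Longrightarrow> QuadRes (int p) (int a^2 + 2)"
    and "\<not> int p dvd y"
  shows "QuadRes (int p) (y^2 + 2)"
proof -
  have "0 < p"
    using assms(1) prime_gt_0_nat by blast
  then obtain a where a: "a < p" "[int a = y] (mod int p)" "a = 0 \<longleftrightarrow> int p dvd y"
    by (rule exists_nat_residue)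
  then have "QuadRes (int p) (int a^2 + 2)"
    using squares assms(3) by simp
  moreover have "[int a^2 + 2 = y^2 + 2] (mod int p)"
    by (intro cong_add cong_pow cong_refl a(2))
  ultimately show ?thesis
    by (rule QuadRes_cong)
qed

lemma QuadRes_odd_if_squares_plus_two:
  assumes "prime p"
    and squares: "\<And>a::nat. 0 < a \<Longrightarrow> a < p \<Longrightarrow> QuadRes (int p) (int a^2 + 2)"
    and "2 * i + 1 < p"
  shows "QuadRes (int p) (int (2 * i + 1))"
  using assms(3)
proof (induction i)
  case 0
  show ?case
    unfolding QuadRes_def by (auto intro: exI[of _ 1])
next
  case (Suc i)
  then obtain y where y: "[y^2 = int (2 * i + 1)] (mod int p)"
    unfolding QuadRes_def by auto
  have "\<not> p dvd 2 * i + 1"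
    using Suc.prems by (auto dest: dvd_imp_le)
  then have "\<not> int p dvd int (2 * i + 1)"
    by (simp only: int_dvd_int_iff not_False_eq_True)
  then have "\<not> int p dvd y"
    by (rule cong_square_imp_not_dvd[OF y])
  then have "QuadRes (int p) (y^2 + 2)"
    using QuadRes_nonzero_square_plus_two[OF assms(1) squares] by blast
  moreover have "[y^2 + 2 = int (2 * Suc i + 1)] (mod int p)"
    using cong_add[OF y cong_refl[of 2]] by simp
  ultimately show ?case
    by (rule QuadRes_cong)
qed

lemma QuadRes_imp_square_of_half:
  assumes "prime p" "QuadRes (int p) (int m)" "m < p"
  shows "m \<in> (\<lambda>x. x^2 mod p) ` {..p div 2}"
proof -
  obtain y where y: "[y^2 = int m] (mod int p)"
    using assms(2) unfolding QuadRes_def by blast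
  have "0 < p"
    using assms(1) prime_gt_0_nat by blast
  then obtain x where x: "x < p" "[int x = y] (mod int p)"
    by (rule exists_nat_residue)
  have "[int x^2 = int m] (mod int p)"
    using x(2) y cong_pow cong_trans by blast
  then have "[x^2 = m] (mod p)"
    by (simp add: cong_int_iff flip: of_nat_power)
  then have sq: "x^2 mod p = m"
    using assms(3) unfolding cong_def by simp
  show ?thesis
  proof (cases "x \<le> p div 2")
    case True
    then show ?thesis
      using sq by blast
  next
    case False
    have "[int (p - x) = - int x] (mod int p)"
      using x(1) by (simp add: cong_iff_dvd_diff)
    then have "[int (p - x)^2 = int x^2] (mod int p)"
      using cong_pow[of "int (p - x)" "- int x" "int p" 2] by simp
    then have "[(p - x)^2 = x^2] (mod p)"
      by (simp add: cong_int_iff flip: of_nat_power)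
    then have "(p - x)^2 mod p = m"
      using sq unfolding cong_def by simp
    moreover have "p - x \<le> p div 2"
      using False by linarith
    ultimately show ?thesis
      by (intro image_eqI[of _ _ "p - x"]) auto
  qed
qed

lemma exists_nonresidue_square_plus_two:
  assumes "prime p" "p \<ge> 5"
  shows "\<exists>a::nat. 0 < a \<and> a < p \<and> \<not> QuadRes (int p) (int a^2 + 2)"
proof (rule ccontr)
  assume "\<not> ?thesis"
  then have squares: "\<And>a::nat. 0 < a \<Longrightarrow> a < p \<Longrightarrow> QuadRes (int p) (int a^2 + 2)"
    by blast
  have "odd p"
    using assms prime_odd_nat by simp
  define odds where "odds = (\<lambda>i. 2 * i + 1) ` {..<p div 2}"
  have "odds \<subseteq> (\<lambda>x. x^2 mod p) ` {..p div 2}"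
  proof
    fix m assume "m \<in> odds"
    then obtain i where "m = 2 * i + 1" "2 * i + 1 < p"
      unfolding odds_def using \<open>odd p\<close> by (auto elim!: oddE)
    then show "m \<in> (\<lambda>x. x^2 mod p) ` {..p div 2}"
      using QuadRes_odd_if_squares_plus_two[OF assms(1) squares] QuadRes_imp_square_of_half[OF assms(1)]
      by blast
  qed
  moreover have "0 \<in> (\<lambda>x. x^2 mod p) ` {..p div 2}"
    by (intro image_eqI[of _ _ 0]) auto
  moreover have "4 \<in> (\<lambda>x. x^2 mod p) ` {..p div 2}"
    using assms(2) by (intro image_eqI[of _ _ 2]) auto
  ultimately have "card (odds \<union> {0, 4}) \<le> card ((\<lambda>x. x^2 mod p) ` {..p div 2})"
    by (intro card_mono) auto
  also have "\<dots> \<le> p div 2 + 1"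
    using card_image_le[of "{..p div 2}" "\<lambda>x. x^2 mod p"] by simp
  finally have "card (odds \<union> {0, 4}) \<le> p div 2 + 1" .
  moreover have "card odds = p div 2"
    unfolding odds_def by (simp add: card_image inj_on_def)
  moreover have "2 * i + 1 \<noteq> (4::nat)" for i
    by presburger
  then have "odds \<inter> {0, 4} = {}"
    unfolding odds_def by auto
  moreover have "finite odds"
    unfolding odds_def by simp
  ultimately show False
    by (simp add: card_Un_disjoint)
qed

lemma exists_nonresidue_three_times_square_plus_two:
  assumes "prime p" "p \<ge> 5"
  shows "\<exists>a::nat. 0 < a \<and> a < p \<and> \<not> QuadRes (int p) (3 * (int a^2 + 2))"
proof -
  have p_ndvd_2: "\<not> int p dvd 2" and p_ndvd_3: "\<not> int p dvd 3"
    using assms(2) by (auto dest: zdvd_imp_le)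
  have prime_p: "prime (int p)"
    using assms(1) by simp
  consider (res_3) y where "[y^2 = 3] (mod int p)"
    | (res_2) s where "\<not> QuadRes (int p) 3" "[s^2 = 2] (mod int p)"
    | (nonres) "\<not> QuadRes (int p) 3" "\<not> QuadRes (int p) 2"
    unfolding QuadRes_def by blast
  then show ?thesis
  proof cases
    case (res_3 y)
    obtain a where a: "0 < a" "a < p" "\<not> QuadRes (int p) (int a^2 + 2)"
      using exists_nonresidue_square_plus_two[OF assms] by blast
    have "[3 * (int a^2 + 2) = y^2 * (int a^2 + 2)] (mod int p)"
      by (rule cong_mult[OF cong_sym[OF res_3] cong_refl])
    with a(3) have "\<not> QuadRes (int p) (3 * (int a^2 + 2))"
      using QuadRes_cancel_square[OF prime_p cong_square_imp_not_dvd[OF res_3 p_ndvd_3]] by blast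
    with a(1,2) show ?thesis
      by blast
  next
    case (res_2 s)
    have "0 < p"
      using assms(1) prime_gt_0_nat by blast
    then obtain a where a: "a < p" "[int a = s] (mod int p)" "a = 0 \<longleftrightarrow> int p dvd s"
      by (rule exists_nat_residue)
    have "a \<noteq> 0"
      using a(3) cong_square_imp_not_dvd[OF res_2(2) p_ndvd_2] by blast
    have "[3 * (int a^2 + 2) = 3 * (2 + 2)] (mod int p)"
      by (intro cong_mult cong_add cong_refl cong_trans[OF cong_pow[OF a(2)] res_2(2)])
    then have "[3 * (int a^2 + 2) = 2^2 * 3] (mod int p)"
      by simp
    with res_2(1) have "\<not> QuadRes (int p) (3 * (int a^2 + 2))"
      using QuadRes_cancel_square[OF prime_p p_ndvd_2] by blast
    with a(1) \<open>a \<noteq> 0\<close> show ?thesis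
      by blast
  next
    case nonres
    have "[3 * (int 2^2 + 2) = 3^2 * 2] (mod int p)"
      by simp
    with nonres(2) have "\<not> QuadRes (int p) (3 * (int 2^2 + 2))"
      using QuadRes_cancel_square[OF prime_p p_ndvd_3] by blast
    with assms(2) show ?thesis
      by (intro exI[of _ 2]) simp
  qed
qed

section \<open>Expanding 1/(v - 1)^2 over the l-th roots of unity\<close>

definition inv_sq_coeff :: "nat \<Rightarrow> nat \<Rightarrow> 'a::comm_ring_1" where
  "inv_sq_coeff l j = of_nat j * (of_nat j + 2 - of_nat l)"

(* The second difference of j (j + 2 - l) is 2, so only boundary terms survive. *)
lemma inv_sq_coeff_sum_times_square:
  fixes v :: "'a::comm_ring_1"
  shows "(1 - v)^2 * (\<Sum>j<n + 2. inv_sq_coeff l j * v^j) =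
    (3 - of_nat l) * v + 2 * ((\<Sum>j<n + 2. v^j) - 1 - v)
    + (inv_sq_coeff l n - 2 * inv_sq_coeff l (n + 1)) * v^(n + 2)
    + inv_sq_coeff l (n + 1) * v^(n + 3)"
proof (induction n)
  case 0
  show ?case
    by (simp add: inv_sq_coeff_def power2_eq_square algebra_simps eval_nat_numeral)
next
  case (Suc n)
  have "(1 - v)^2 * (\<Sum>j<Suc n + 2. inv_sq_coeff l j * v^j) =
      (1 - v)^2 * (\<Sum>j<n + 2. inv_sq_coeff l j * v^j) + (1 - v)^2 * inv_sq_coeff l (n + 2) * v^(n + 2)"
    by (simp add: algebra_simps)
  also have "\<dots> = (3 - of_nat l) * v + 2 * ((\<Sum>j<Suc n + 2. v^j) - 1 - v)
      + (inv_sq_coeff l (Suc n) - 2 * inv_sq_coeff l (Suc n + 1)) * v^(Suc n + 2)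
      + inv_sq_coeff l (Suc n + 1) * v^(Suc n + 3)"
    unfolding Suc.IH
    by (simp add: inv_sq_coeff_def power_add algebra_simps power2_eq_square eval_nat_numeral)
  finally show ?case .
qed

lemma inv_sq_coeff_sum_root_unity:
  fixes v :: "'a::field"
  assumes "0 < l" "v^l = 1" "v \<noteq> 1"
  shows "(1 - v)^2 * (\<Sum>j<l. inv_sq_coeff l j * v^j) = - 2 * of_nat l"
proof -
  have "l \<noteq> 1"
    using assms(2,3) by auto
  with assms(1) have "2 \<le> l"
    by linarith
  then obtain n where n: "n + 2 = l" "n + 3 = Suc l"
    using le_Suc_ex by (metis add.commute add_Suc_right numeral_2_eq_2 numeral_3_eq_3)
  have "(\<Sum>j<l. v^j) = 0"
    using assms(2,3) by (simp add: sum_gp_strict)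
  moreover have "inv_sq_coeff l n = (0::'a)" "inv_sq_coeff l (n + 1) = (of_nat n + 1 :: 'a)"
    unfolding inv_sq_coeff_def n(1)[symmetric] by (simp_all add: algebra_simps)
  moreover have "(of_nat l :: 'a) = of_nat n + 2"
    using n(1) by auto
  ultimately have "(3 - of_nat l) * v + 2 * ((\<Sum>j<l. v^j) - 1 - v)
      + (inv_sq_coeff l n - 2 * inv_sq_coeff l (n + 1)) * v^l + inv_sq_coeff l (n + 1) * v^(Suc l)
      = - 2 * of_nat l"
    using assms(2) by (simp add: algebra_simps)
  then show ?thesis
    using inv_sq_coeff_sum_times_square[where v = v and n = n and l = l] unfolding n by simp
qed

lemma inverse_square_root_unity_expansion:
  fixes v :: "'a::field_char_0"
  assumes "0 < l" "v^l = 1" "v \<noteq> 1"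
  shows "1 / (v - 1)^2 = - (\<Sum>j<l. inv_sq_coeff l j * v^j) / (2 * of_nat l)"
proof -
  have "(v - 1)^2 \<noteq> 0"
    using assms(3) by simp
  moreover have "(v - 1)^2 = (1 - v)^2"
    by (simp add: power2_commute)
  ultimately show ?thesis
    using inv_sq_coeff_sum_root_unity[OF assms] assms(1) by (simp add: field_simps)
qed

lemma sum_inv_sq_coeff:
  "(\<Sum>j<l. inv_sq_coeff l j :: 'a::field_char_0) = of_nat l * (of_nat l - 1) * (5 - of_nat l) / 6"
proof -
  have "(\<Sum>j<n. inv_sq_coeff l j :: 'a) =
      of_nat n * (of_nat n - 1) * (2 * of_nat n - 1) / 6 + (2 - of_nat l) * of_nat n * (of_nat n - 1) / 2" for n
    by (induction n) (simp_all add: inv_sq_coeff_def field_simps)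
  from this[of l]
  have "(\<Sum>j<l. inv_sq_coeff l j :: 'a) =
      of_nat l * (of_nat l - 1) * (2 * of_nat l - 1) / 6 + (2 - of_nat l) * of_nat l * (of_nat l - 1) / 2" .
  also have "of_nat l * (of_nat l - 1) * (2 * of_nat l - 1) / 6 + (2 - of_nat l) * of_nat l * (of_nat l - 1) / 2
      = (of_nat l * (of_nat l - 1) * (5 - of_nat l) / 6 :: 'a)"
    by (simp add: field_simps)
  finally show ?thesis .
qed

lemma inv_sq_coeff_reflect:
  assumes "j + 2 \<le> l"
  shows "inv_sq_coeff l (l - 2 - j) = inv_sq_coeff l j"
  using assms by (simp add: inv_sq_coeff_def algebra_simps)

section \<open>The trace\<close>

lemma prim_root_unity_pow_eq_1_iff:
  assumes "prim_root_unity l \<zeta>"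
  shows "\<zeta>^n = 1 \<longleftrightarrow> l dvd n"
proof -
  have l: "0 < l" "\<zeta>^l = 1" "\<And>k. 0 < k \<Longrightarrow> k < l \<Longrightarrow> \<zeta>^k \<noteq> 1"
    using assms unfolding prim_root_unity_def by auto
  have "\<zeta>^n = \<zeta>^(n mod l) * (\<zeta>^l)^(n div l)"
    by (metis mod_div_mult_eq power_add power_mult mult.commute)
  then have "\<zeta>^n = \<zeta>^(n mod l)"
    using l(2) by simp
  moreover have "\<zeta>^(n mod l) = 1 \<longleftrightarrow> n mod l = 0"
    using l(1) l(3)[of "n mod l"] by auto
  ultimately show ?thesis
    by (simp add: dvd_eq_mod_eq_0)
qed

lemma sum_prim_root_unity_powers:
  assumes "prim_root_unity l \<zeta>"
  shows "(\<Sum>k\<in>{1..<l}. \<zeta>^(k * n)) = of_nat l * of_bool (l dvd n) - 1"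
proof -
  have "0 < l" "\<zeta>^l = 1"
    using assms unfolding prim_root_unity_def by auto
  have pow: "\<zeta>^(k * n) = (\<zeta>^n)^k" for k
    by (simp only: mult.commute[of k] power_mult)
  have "(\<zeta>^n)^l = 1"
    using \<open>\<zeta>^l = 1\<close> by (simp flip: pow add: power_mult)
  then have "(\<Sum>k<l. \<zeta>^(k * n)) = of_nat l * of_bool (l dvd n)"
    using prim_root_unity_pow_eq_1_iff[OF assms, of n] by (simp add: pow sum_gp_strict)
  moreover have "{..<l} = insert 0 {1..<l}"
    using \<open>0 < l\<close> by auto
  ultimately have "1 + (\<Sum>k\<in>{1..<l}. \<zeta>^(k * n)) = of_nat l * of_bool (l dvd n)"
    by simp
  then show ?thesis
    by (metis add_diff_cancel_left')
qed

lemma cyclo_trace_prime: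
  assumes "prime l"
  shows "cyclo_trace l \<zeta> f = (\<Sum>k\<in>{1..<l}. f (\<zeta>^k))"
proof -
  have "coprime k l \<longleftrightarrow> 0 < k" if "k < l" for k
  proof (cases "k = 0")
    case True
    then show ?thesis
      using assms by auto
  next
    case False
    then have "\<not> l dvd k"
      using that by (auto dest: dvd_imp_le)
    with False show ?thesis
      using prime_imp_coprime[OF assms] by (simp add: coprime_commute)
  qed
  then have "{k. k < l \<and> coprime k l} = {1..<l}"
    by auto
  then show ?thesis
    unfolding cyclo_trace_def by simp
qed

lemma sum_of_bool_dvd_linear:
  fixes f :: "nat \<Rightarrow> 'a::comm_ring_1"
  assumes "prime l" "\<not> l dvd p" "j0 < l" "l dvd p * j0 + r"
  shows "(\<Sum>j<l. of_bool (l dvd p * j + r) * f j) = f j0"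
proof -
  have "coprime p l"
    using prime_imp_coprime[OF assms(1,2)] by (simp add: coprime_commute)
  have "l dvd p * j + r \<longleftrightarrow> j = j0" if "j < l" for j
  proof
    assume "l dvd p * j + r"
    then have "[p * j + r = p * j0 + r] (mod l)"
      using assms(4) by (simp add: cong_def dvd_eq_mod_eq_0)
    then have "[j = j0] (mod l)"
      using \<open>coprime p l\<close> by (simp add: cong_add_rcancel_nat cong_mult_lcancel_nat)
    then show "j = j0"
      using that assms(3) by (rule cong_less_modulus_unique_nat)
  qed (use assms(4) in simp)
  then have "(\<Sum>j<l. of_bool (l dvd p * j + r) * f j) = (\<Sum>j<l. if j = j0 then f j else 0)"
    by (intro sum.cong) auto
  also have "\<dots> = f j0"
    using assms(3) by simp
  finally show ?thesis .
qed

lemma exists_dvd_linear_minus_one: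
  fixes l p :: nat
  assumes "prime l" "\<not> l dvd p"
  shows "\<exists>j. j + 2 \<le> l \<and> l dvd p * j + (p - 1)"
proof -
  have "coprime p l"
    using prime_imp_coprime[OF assms] by (simp add: coprime_commute)
  then obtain x where "[p * x = 1] (mod l)"
    using cong_solve_coprime_nat by auto
  then have c: "[p * (x mod l) = 1] (mod l)"
    by (simp add: cong_def mod_mult_right_eq)
  have "l > 1"
    using assms(1) prime_gt_1_nat by blast
  have "x mod l \<noteq> 0"
  proof
    assume "x mod l = 0"
    with c \<open>l > 1\<close> show False
      by (simp add: cong_def)
  qed
  then obtain j where j: "x mod l = Suc j"
    using not0_implies_Suc by blast
  have "p > 0"
    using assms(2) by (auto intro: Nat.gr0I)
  have "Suc j < l"
    using \<open>l > 1\<close> j by (metis mod_less_divisor order.strict_trans zero_less_one)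
  moreover have "l dvd p * Suc j - 1"
    using cong_to_1_nat[OF c] unfolding j .
  moreover have "p * Suc j - 1 = p * j + (p - 1)"
    using \<open>p > 0\<close> by simp
  ultimately show ?thesis
    by (intro exI[of _ j]) simp
qed

lemma trace_summand_expansion:
  assumes "prime l" "\<not> l dvd p" "\<not> l dvd k" "prim_root_unity l \<zeta>"
  shows "((\<zeta>^k)^(p + 1) + (\<zeta>^k)^(p - 1)) / ((\<zeta>^k)^p - 1)^2
    = - (\<Sum>j<l. inv_sq_coeff l j * (\<zeta>^(k * (p * j + (p + 1))) + \<zeta>^(k * (p * j + (p - 1)))))
      / (2 * of_nat l)"
proof -
  define w where "w = \<zeta>^k"
  have "0 < l"
    using assms(1) prime_gt_0_nat by blast
  moreover have "(w^p)^l = 1"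
    unfolding w_def power_mult[symmetric] prim_root_unity_pow_eq_1_iff[OF assms(4)] by simp
  moreover have "\<not> l dvd k * p"
    using assms(1-3) prime_dvd_mult_iff by blast
  then have "w^p \<noteq> 1"
    unfolding w_def power_mult[symmetric] prim_root_unity_pow_eq_1_iff[OF assms(4)] .
  ultimately have inv: "1 / (w^p - 1)^2 = - (\<Sum>j<l. inv_sq_coeff l j * (w^p)^j) / (2 * of_nat l)"
    by (rule inverse_square_root_unity_expansion)
  have pow: "\<zeta>^(k * (p * j + r)) = w^r * (w^p)^j" for j r
    unfolding w_def by (simp add: algebra_simps power_add flip: power_mult)
  have sum: "(\<Sum>j<l. inv_sq_coeff l j * (\<zeta>^(k * (p * j + (p + 1))) + \<zeta>^(k * (p * j + (p - 1)))))
      = (w^(p + 1) + w^(p - 1)) * (\<Sum>j<l. inv_sq_coeff l j * (w^p)^j)"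
    unfolding pow sum_distrib_left by (intro sum.cong refl) (simp add: algebra_simps)
  have "(w^(p + 1) + w^(p - 1)) / (w^p - 1)^2 = (w^(p + 1) + w^(p - 1)) * (1 / (w^p - 1)^2)"
    by simp
  also have "\<dots> = - ((w^(p + 1) + w^(p - 1)) * (\<Sum>j<l. inv_sq_coeff l j * (w^p)^j)) / (2 * of_nat l)"
    unfolding inv by simp
  finally show ?thesis
    unfolding sum w_def .
qed

lemma cyclo_trace_as_coeff_sum:
  assumes "prime l" "\<not> l dvd p" "prim_root_unity l \<zeta>"
  shows "cyclo_trace l \<zeta> (\<lambda>z. (z^(p + 1) + z^(p - 1)) / (z^p - 1)^2)
    = - (of_nat l * (\<Sum>j<l. of_bool (l dvd p * j + (p + 1)) * inv_sq_coeff l j)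
        + of_nat l * (\<Sum>j<l. of_bool (l dvd p * j + (p - 1)) * inv_sq_coeff l j)
        - 2 * (\<Sum>j<l. inv_sq_coeff l j)) / (2 * of_nat l)"
proof -
  let ?c = "inv_sq_coeff l :: nat \<Rightarrow> complex"
  let ?n1 = "\<lambda>j. p * j + (p + 1)" and ?n2 = "\<lambda>j. p * j + (p - 1)"
  have "cyclo_trace l \<zeta> (\<lambda>z. (z^(p + 1) + z^(p - 1)) / (z^p - 1)^2)
      = (\<Sum>k\<in>{1..<l}. - (\<Sum>j<l. ?c j * (\<zeta>^(k * ?n1 j) + \<zeta>^(k * ?n2 j))) / (2 * of_nat l))"
    unfolding cyclo_trace_prime[OF assms(1)]
  proof (intro sum.cong refl)
    fix k assume "k \<in> {1..<l}"
    then have "\<not> l dvd k"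
      by (auto dest: dvd_imp_le)
    then show "((\<zeta>^k)^(p + 1) + (\<zeta>^k)^(p - 1)) / ((\<zeta>^k)^p - 1)^2
        = - (\<Sum>j<l. ?c j * (\<zeta>^(k * ?n1 j) + \<zeta>^(k * ?n2 j))) / (2 * of_nat l)"
      by (rule trace_summand_expansion[OF assms(1,2) _ assms(3)])
  qed
  also have "\<dots> = - (\<Sum>k\<in>{1..<l}. \<Sum>j<l. ?c j * (\<zeta>^(k * ?n1 j) + \<zeta>^(k * ?n2 j))) / (2 * of_nat l)"
    by (simp add: sum_divide_distrib[symmetric] sum_negf)
  also have "\<dots> = - (\<Sum>j<l. \<Sum>k\<in>{1..<l}. ?c j * (\<zeta>^(k * ?n1 j) + \<zeta>^(k * ?n2 j))) / (2 * of_nat l)"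
    by (subst sum.swap) (rule refl)
  also have "\<dots> = - (\<Sum>j<l. ?c j * ((\<Sum>k\<in>{1..<l}. \<zeta>^(k * ?n1 j)) + (\<Sum>k\<in>{1..<l}. \<zeta>^(k * ?n2 j))))
      / (2 * of_nat l)"
    by (simp only: sum_distrib_left[symmetric] sum.distrib)
  also have "\<dots> = - (of_nat l * (\<Sum>j<l. of_bool (l dvd ?n1 j) * ?c j)
      + of_nat l * (\<Sum>j<l. of_bool (l dvd ?n2 j) * ?c j) - 2 * (\<Sum>j<l. ?c j)) / (2 * of_nat l)"
  proof -
    have "?c j * ((of_nat l * of_bool (l dvd ?n1 j) - 1) + (of_nat l * of_bool (l dvd ?n2 j) - 1))
        = of_nat l * (of_bool (l dvd ?n1 j) * ?c j) + of_nat l * (of_bool (l dvd ?n2 j) * ?c j) - 2 * ?c j"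
      for j
      by (simp add: algebra_simps)
    then show ?thesis
      unfolding sum_prim_root_unity_powers[OF assms(3)]
      by (simp only: sum.distrib sum_subtractf sum_distrib_left)
  qed
  finally show ?thesis .
qed

lemma cyclo_trace_formula:
  assumes "prime l" "\<not> l dvd p" "prim_root_unity l \<zeta>"
  shows "\<exists>j. cyclo_trace l \<zeta> (\<lambda>z. (z^(p + 1) + z^(p - 1)) / (z^p - 1)^2)
    = - inv_sq_coeff l j - (of_nat l - 1) * (of_nat l - 5) / 6"
proof -
  obtain j2 where j2: "j2 + 2 \<le> l" "l dvd p * j2 + (p - 1)"
    using exists_dvd_linear_minus_one[OF assms(1,2)] by blast
  define j1 where "j1 = l - 2 - j2"
  have "j1 + j2 + 2 = l"
    using j2(1) unfolding j1_def by simp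
  moreover have "(p * j1 + (p + 1)) + (p * j2 + (p - 1)) = p * (j1 + j2 + 2)"
    using assms(2) by (cases p) (simp_all add: algebra_simps)
  ultimately have "l dvd p * j1 + (p + 1)"
    using j2(2) by (metis dvd_add_left_iff dvd_triv_right)
  moreover have "j1 < l" "j2 < l"
    using j2(1) unfolding j1_def by auto
  ultimately have sum1: "(\<Sum>j<l. of_bool (l dvd p * j + (p + 1)) * inv_sq_coeff l j) = inv_sq_coeff l j1"
    and sum2: "(\<Sum>j<l. of_bool (l dvd p * j + (p - 1)) * inv_sq_coeff l j) = (inv_sq_coeff l j2 :: complex)"
    using sum_of_bool_dvd_linear[OF assms(1,2)] j2(2) by blast+
  have "0 < l"
    using assms(1) prime_gt_0_nat by blast
  have "cyclo_trace l \<zeta> (\<lambda>z. (z^(p + 1) + z^(p - 1)) / (z^p - 1)^2)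
      = - (of_nat l * inv_sq_coeff l j1 + of_nat l * inv_sq_coeff l j2 - 2 * (\<Sum>j<l. inv_sq_coeff l j))
        / (2 * of_nat l)"
    unfolding cyclo_trace_as_coeff_sum[OF assms] sum1 sum2 ..
  also have "\<dots> = - inv_sq_coeff l j2 - (of_nat l - 1) * (of_nat l - 5) / 6"
    using \<open>0 < l\<close> unfolding j1_def inv_sq_coeff_reflect[OF j2(1)] sum_inv_sq_coeff
    by (simp add: field_simps)
  finally show ?thesis
    by blast
qed

lemma QuadRes_of_dvd_trace_numerator:
  fixes j l a p :: int
  assumes "[l = a] (mod p)" "p dvd 6 * j * (j + 2 - l) + (l - 1) * (l - 5)"
  shows "QuadRes p (3 * (a^2 + 2))"
proof -
  define x where "x = 6 * j + 6 - 3 * l"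
  have x: "x^2 - 3 * (l^2 + 2) = 6 * (6 * j * (j + 2 - l) + (l - 1) * (l - 5))"
    unfolding x_def by (simp add: algebra_simps power2_eq_square)
  have "p dvd x^2 - 3 * (l^2 + 2)"
    unfolding x using assms(2) by (rule dvd_mult)
  then have "[x^2 = 3 * (l^2 + 2)] (mod p)"
    by (simp add: cong_iff_dvd_diff)
  also have "[3 * (l^2 + 2) = 3 * (a^2 + 2)] (mod p)"
    by (intro cong_mult cong_add cong_pow cong_refl assms(1))
  finally show ?thesis
    unfolding QuadRes_def by blast
qed

lemma padic_unitI:
  assumes "prime p" "of_int m * q = of_int n" "\<not> int p dvd m" "\<not> int p dvd n"
  shows "padic_unit p q"
proof -
  obtain a b where ab: "quotient_of q = (a, b)"
    by (cases "quotient_of q")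
  have "b > 0" "coprime a b" "q = of_int a / of_int b"
    using ab quotient_of_denom_pos quotient_of_coprime quotient_of_div by blast+
  then have "of_int (m * a) = (of_int m * q) * (of_int b :: rat)"
    by simp
  also have "\<dots> = of_int (n * b)"
    using assms(2) by simp
  finally have "m * a = n * b"
    by (simp only: of_int_eq_iff)
  have "prime (int p)"
    using assms(1) by simp
  have "\<not> int p dvd b"
  proof
    assume "int p dvd b"
    then have "int p dvd m * a"
      unfolding \<open>m * a = n * b\<close> by simp
    with assms(3) have "int p dvd a"
      using \<open>prime (int p)\<close> prime_dvd_mult_iff by blast
    with \<open>int p dvd b\<close> \<open>coprime a b\<close> show False
      using \<open>prime (int p)\<close> coprime_common_divisor not_prime_unit by blast
  qed
  moreover have "\<not> int p dvd a"
  proof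
    assume "int p dvd a"
    then have "int p dvd n * b"
      unfolding \<open>m * a = n * b\<close>[symmetric] by simp
    with assms(4) \<open>\<not> int p dvd b\<close> show False
      using \<open>prime (int p)\<close> prime_dvd_mult_iff by blast
  qed
  ultimately show ?thesis
    unfolding padic_unit_def ab by simp
qed

lemma cyclo_trace_padic_unit:
  assumes "prime p" "p \<ge> 5" "\<not> QuadRes (int p) (3 * (int a^2 + 2))"
    and "prime l" "p < l" "[l = a] (mod p)" "prim_root_unity l \<zeta>"
  shows "\<exists>q. cyclo_trace l \<zeta> (\<lambda>z. (z^(p + 1) + z^(p - 1)) / (z^p - 1)^2) = of_rat q \<and> padic_unit p q"
proof -
  have "\<not> l dvd p"
    using assms(1,5) prime_gt_0_nat by (auto dest: dvd_imp_le)
  then obtain j where j: "cyclo_trace l \<zeta> (\<lambda>z. (z^(p + 1) + z^(p - 1)) / (z^p - 1)^2)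
      = - inv_sq_coeff l j - (of_nat l - 1) * (of_nat l - 5) / 6"
    using cyclo_trace_formula[OF assms(4) _ assms(7)] by blast
  define q :: rat where "q = - inv_sq_coeff l j - (of_nat l - 1) * (of_nat l - 5) / 6"
  define n :: int where "n = 6 * int j * (int j + 2 - int l) + (int l - 1) * (int l - 5)"
  have "of_int 6 * q = of_int (- n)"
    unfolding q_def n_def inv_sq_coeff_def by (simp add: field_simps)
  moreover have "[int l = int a] (mod int p)"
    using assms(6) by (simp add: cong_int_iff)
  then have "\<not> int p dvd n"
    using QuadRes_of_dvd_trace_numerator assms(3) unfolding n_def by blast
  then have "\<not> int p dvd - n"
    by simp
  moreover have "\<not> p dvd 2 * 3"
    using prime_dvd_mult_iff[OF assms(1), of 2 3] assms(2) by (auto dest: dvd_imp_le)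
  then have "\<not> int p dvd 6"
    using int_dvd_int_iff[of p 6] by simp
  ultimately have "padic_unit p q"
    using padic_unitI[OF assms(1)] by blast
  moreover have "cyclo_trace l \<zeta> (\<lambda>z. (z^(p + 1) + z^(p - 1)) / (z^p - 1)^2) = of_rat q"
    unfolding j q_def inv_sq_coeff_def by (simp add: of_rat_minus of_rat_diff of_rat_mult of_rat_divide of_rat_add)
  ultimately show ?thesis
    by blast
qed

theorem lemma3p4:
  fixes p :: nat
  assumes "prime p" and "p \<ge> 5"
  shows "\<exists>a::nat. 0 < a \<and> a < p \<and>
    (\<forall>l::nat. prime l \<and> l \<ge> p ^ 2 \<and> l mod p = a \<longrightarrow>
      (\<forall>\<zeta>::complex. prim_root_unity l \<zeta> \<longrightarrow>
        (\<exists>q::rat. cyclo_trace l \<zeta> (\<lambda>z. (z ^ (p + 1) + z ^ (p - 1)) / (z ^ p - 1) ^ 2) = of_rat q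
                 \<and> padic_unit p q)))"
proof -
  obtain a where a: "0 < a" "a < p" "\<not> QuadRes (int p) (3 * (int a^2 + 2))"
    using exists_nonresidue_three_times_square_plus_two[OF assms] by blast
  have "p < p^2"
    using assms(2) by (simp add: power2_eq_square)
  then have "p < l" "[l = a] (mod p)" if "l \<ge> p^2" "l mod p = a" for l
    using that a(2) by (simp_all add: cong_def)
  with a show ?thesis
    using cyclo_trace_padic_unit[OF assms a(3)] by blast
qed

end
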